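(* Let $\alpha>0$, let $W$ be a standard Brownian motion, and let $X$ solve $dX_t=-\alpha X_t\,dt+dW_t$, $X_0=0$. Let $X^*_t=\sup_{0\le s\le t}|X_s|$. There exists a function $\phi:\mathbb{R}_+\to\mathbb{R}_+$ satisfying $\phi(\delta)\to0$ as $\delta\to0$ such that for any $t\ge2$ and $\delta>0$, \[ \mathbb{P}\big(X^*_t\ge\delta^{-1}\log^{1/2}t\big)\le \phi(\delta). \] *)

theory Defs
  imports "HOL-Probability.Probability"
begin

definition std_brownian_motion :: "'a measure \<Rightarrow> (real \<Rightarrow> 'a \<Rightarrow> real) \<Rightarrow> bool" where
  "std_brownian_motion M W \<longleftrightarrow>
     prob_space M \<and>
     (\<forall>t\<ge>0. W t \<in> borel_measurable M) \<and>
     (\<forall>\<omega>\<in>space M. W 0 \<omega> = 0 \<and> continuous_on {0..} (\<lambda>t. W t \<omega>)) \<and>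
     (\<forall>s t. 0 \<le> s \<and> s < t \<longrightarrow>
        distributed M lborel (\<lambda>\<omega>. W t \<omega> - W s \<omega>)
          (\<lambda>x. ennreal (normal_density 0 (sqrt (t - s)) x))) \<and>
     (\<forall>ts :: real list. sorted_wrt (<) ts \<and> ts \<noteq> [] \<and> 0 \<le> hd ts \<longrightarrow>
        prob_space.indep_vars M (\<lambda>_. borel)
          (\<lambda>i \<omega>. W (ts ! Suc i) \<omega> - W (ts ! i) \<omega>) {..<length ts - 1})"

text \<open>Pathwise (strong) solution of dX = -alpha X dt + dW, X_0 = 0 (additive noise):
  continuous paths with X_t = W_t - alpha * int_0^t X_s ds.\<close>
definition ou_solution :: "'a measure \<Rightarrow> real \<Rightarrow> (real \<Rightarrow> 'a \<Rightarrow> real) \<Rightarrow> (real \<Rightarrow> 'a \<Rightarrow> real) \<Rightarrow> bool" where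
  "ou_solution M \<alpha> W X \<longleftrightarrow>
     (\<forall>\<omega>\<in>space M. continuous_on {0..} (\<lambda>t. X t \<omega>) \<and>
        (\<forall>t\<ge>0. X t \<omega> = W t \<omega> - \<alpha> * integral {0..t} (\<lambda>s. X s \<omega>)))"

end

theory Submission
  imports Defs "HOL-Real_Asymp.Real_Asymp"
begin

text \<open>
  If the Brownian path oscillates by at most b on [i, i+1], the equation X = W - \<alpha> \<integral>X makes
  exp(\<alpha> s) (\<plusminus>(X s - W s + W i) - b) nonincreasing on [i, i+1], whence
  |X (i+1)| \<le> 2b + exp(-\<alpha>) |X i|; iterating, |X| stays below C b up to time N, with
  C = 2 + 2/(1 - exp(-\<alpha>)). By dyadic chaining the oscillation on [i, i+1] exceeds b only if
  some dyadic increment of level n exceeds b/4 (3/4)^n, which by the Gaussian tail and a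
  union bound has probability at most 4 exp(-b^2/32). For b = \<surd>(ln t) / (2 C \<delta>) this is
  4 t^(-r) with r = 1/(128 C^2 \<delta>^2), which beats the \<lceil>t\<rceil> unit intervals once \<delta> is small.
\<close>

subsection \<open>Gaussian tails\<close>

lemma normal_density_mult_exp:
  assumes "\<sigma> > 0"
  shows "normal_density 0 \<sigma> y * exp (l * y) = exp (l\<^sup>2 * \<sigma>\<^sup>2 / 2) * normal_density (l * \<sigma>\<^sup>2) \<sigma> y"
proof -
  have exponent: "- (y - 0)\<^sup>2 / (2 * \<sigma>\<^sup>2) + l * y = l\<^sup>2 * \<sigma>\<^sup>2 / 2 + - (y - l * \<sigma>\<^sup>2)\<^sup>2 / (2 * \<sigma>\<^sup>2)"
    using assms by (simp add: power2_eq_square field_simps)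
  let ?k = "1 / sqrt (2 * pi * \<sigma>\<^sup>2)"
  have "normal_density 0 \<sigma> y * exp (l * y) = ?k * exp (- (y - 0)\<^sup>2 / (2 * \<sigma>\<^sup>2) + l * y)"
    unfolding normal_density_def exp_add by simp
  also have "\<dots> = exp (l\<^sup>2 * \<sigma>\<^sup>2 / 2) * normal_density (l * \<sigma>\<^sup>2) \<sigma> y"
    unfolding exponent normal_density_def exp_add by simp
  finally show ?thesis .
qed

lemma normal_tail_bound:
  assumes "prob_space M" and D: "distributed M lborel Y (\<lambda>y. ennreal (normal_density 0 \<sigma> y))"
    and \<sigma>: "\<sigma> > 0" and x: "x \<ge> 0"
  shows "measure M {\<omega>\<in>space M. x < \<bar>Y \<omega>\<bar>} \<le> 2 * exp (- x\<^sup>2 / (2 * \<sigma>\<^sup>2))"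
proof -
  interpret prob_space M by fact
  define A where "A = {y::real. x < \<bar>y\<bar>}"
  have A: "A \<in> sets borel" unfolding A_def by measurable
  define l where "l = x / \<sigma>\<^sup>2"
  have l: "l \<ge> 0" using x \<sigma> by (simp add: l_def)
  define c where "c = exp (- l * x) * exp (l\<^sup>2 * \<sigma>\<^sup>2 / 2)"
  let ?nd = "normal_density 0 \<sigma>"
  have "measure M {\<omega>\<in>space M. x < \<bar>Y \<omega>\<bar>} = (\<integral>\<omega>. indicator A (Y \<omega>) \<partial>M)"
  proof -
    have "{\<omega>\<in>space M. x < \<bar>Y \<omega>\<bar>} = Y -` A \<inter> space M" by (auto simp: A_def)
    then have "measure M {\<omega>\<in>space M. x < \<bar>Y \<omega>\<bar>} = (\<integral>\<omega>. indicator (Y -` A \<inter> space M) \<omega> \<partial>M)"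
      by (simp add: Int_assoc)
    also have "\<dots> = (\<integral>\<omega>. indicator A (Y \<omega>) \<partial>M)"
      by (rule Bochner_Integration.integral_cong) (auto simp: indicator_def)
    finally show ?thesis .
  qed
  also have "\<dots> = (\<integral>y. ?nd y * indicator A y \<partial>lborel)"
    by (rule distributed_integral[OF D, symmetric]) (use A in auto)
  also have "\<dots> \<le> (\<integral>y. c * normal_density (l * \<sigma>\<^sup>2) \<sigma> y + c * normal_density (- l * \<sigma>\<^sup>2) \<sigma> y \<partial>lborel)"
  proof (rule integral_mono)
    show "integrable lborel (\<lambda>y. ?nd y * indicator A y)"
      using A \<sigma> by (intro integrable_real_mult_indicator) auto
    show "integrable lborel (\<lambda>y. c * normal_density (l * \<sigma>\<^sup>2) \<sigma> y + c * normal_density (- l * \<sigma>\<^sup>2) \<sigma> y)"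
      using \<sigma> by auto
    fix y :: real
    have "indicator A y \<le> exp (l * (y - x)) + exp (- l * (y + x))"
    proof (cases "y \<in> A")
      case True
      then have "x < y \<or> y < - x" by (auto simp: A_def)
      then have "0 \<le> l * (y - x) \<or> 0 \<le> - l * (y + x)"
        using l by (auto simp: mult_nonneg_nonpos)
      then show ?thesis
        using True by (smt (verit) exp_gt_zero one_le_exp_iff indicator_simps(1))
    qed (simp add: add_pos_pos)
    then have "?nd y * indicator A y \<le> ?nd y * (exp (l * (y - x)) + exp (- l * (y + x)))"
      by (rule mult_left_mono) simp
    also have "\<dots> = exp (- l * x) * (?nd y * exp (l * y)) + exp (- l * x) * (?nd y * exp ((- l) * y))"
      by (simp add: algebra_simps exp_add[symmetric] exp_diff)
    also have "\<dots> = c * normal_density (l * \<sigma>\<^sup>2) \<sigma> y + c * normal_density (- l * \<sigma>\<^sup>2) \<sigma> y"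
      using normal_density_mult_exp[OF \<sigma>, of y l] normal_density_mult_exp[OF \<sigma>, of y "- l"]
      by (simp add: c_def)
    finally show "?nd y * indicator A y \<le> \<dots>" .
  qed
  also have "\<dots> = 2 * c"
    using \<sigma> by (subst Bochner_Integration.integral_add) auto
  also have "c = exp (- x\<^sup>2 / (2 * \<sigma>\<^sup>2))"
    using \<sigma> unfolding c_def l_def exp_add[symmetric] by (simp add: power2_eq_square field_simps)
  finally show ?thesis .
qed

lemma std_brownian_motion_increment_tail:
  assumes BM: "std_brownian_motion M W" and "0 \<le> s" "s < t" "0 \<le> x"
  shows "{\<omega>\<in>space M. x < \<bar>W t \<omega> - W s \<omega>\<bar>} \<in> sets M"
    and "measure M {\<omega>\<in>space M. x < \<bar>W t \<omega> - W s \<omega>\<bar>} \<le> 2 * exp (- x\<^sup>2 / (2 * (t - s)))"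
proof -
  have "W t \<in> borel_measurable M" "W s \<in> borel_measurable M"
    using BM assms unfolding std_brownian_motion_def by auto
  then show "{\<omega>\<in>space M. x < \<bar>W t \<omega> - W s \<omega>\<bar>} \<in> sets M" by measurable
  have "prob_space M"
    and "distributed M lborel (\<lambda>\<omega>. W t \<omega> - W s \<omega>) (\<lambda>x. ennreal (normal_density 0 (sqrt (t - s)) x))"
    using BM assms unfolding std_brownian_motion_def by auto
  from normal_tail_bound[OF this] assms
  show "measure M {\<omega>\<in>space M. x < \<bar>W t \<omega> - W s \<omega>\<bar>} \<le> 2 * exp (- x\<^sup>2 / (2 * (t - s)))"
    by simp
qed

subsection \<open>Pathwise bound for the Ornstein--Uhlenbeck equation\<close>

lemma ou_exp_weighted_decreasing:
  fixes X W :: "real \<Rightarrow> real"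
  assumes \<alpha>: "\<alpha> > 0" and cont: "continuous_on {0..} X"
    and eq: "\<forall>t\<ge>0. X t = W t - \<alpha> * integral {0..t} X"
    and i: "0 \<le> i" and osc: "\<forall>u\<in>{i..i+1}. \<bar>W u - W i\<bar> \<le> b"
    and s: "s \<in> {i..i+1}" and c: "\<bar>c\<bar> = 1"
  shows "exp (\<alpha> * s) * (c * (X s - W s + W i) - b) \<le> exp (\<alpha> * i) * (c * X i - b)"
proof -
  define F where "F u = integral {0..u} X" for u
  define g where "g u = exp (\<alpha> * u) * (c * (W i - \<alpha> * F u) - b)" for u
  have Z: "X u - W u + W i = W i - \<alpha> * F u" if "u \<ge> 0" for u
    using eq that unfolding F_def by auto
  have "continuous_on {0..s} X" using cont by (rule continuous_on_subset) auto
  then have F': "(F has_real_derivative X x) (at x within {0..s})" if "x \<in> {0..s}" for x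
    unfolding F_def using that by (rule integral_has_real_derivative)
  then have "continuous_on {0..s} F"
    by (meson DERIV_continuous continuous_on_eq_continuous_within)
  then have "continuous_on {i..s} g"
    unfolding g_def using i by (auto intro!: continuous_intros intro: continuous_on_subset)
  moreover have "\<exists>y. (g has_real_derivative y) (at x) \<and> y \<le> 0" if x: "i < x" "x < s" for x
  proof -
    have "(F has_real_derivative X x) (at x)"
      using F'[of x] x i by (simp add: at_within_Icc_at)
    then have deriv: "(g has_real_derivative \<alpha> * exp (\<alpha> * x) * (c * (W i - \<alpha> * F x) - b)
                 + exp (\<alpha> * x) * (c * (- \<alpha> * X x))) (at x)"
      unfolding g_def by (auto intro!: derivative_eq_intros)
    have X_x: "X x = (W i - \<alpha> * F x) + (W x - W i)" using Z[of x] x i by simp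
    have "\<alpha> * exp (\<alpha> * x) * (c * (W i - \<alpha> * F x) - b) + exp (\<alpha> * x) * (c * (- \<alpha> * X x))
        = \<alpha> * exp (\<alpha> * x) * (- b - c * (W x - W i))"
      unfolding X_x by (simp add: algebra_simps)
    moreover have "\<bar>c * (W x - W i)\<bar> \<le> b" using osc x s c by (auto simp: abs_mult)
    then have "\<alpha> * exp (\<alpha> * x) * (- b - c * (W x - W i)) \<le> 0"
      using \<alpha> by (intro mult_nonneg_nonpos) auto
    ultimately show ?thesis using deriv by auto
  qed
  ultimately have "g s \<le> g i"
    using s by (intro DERIV_nonpos_imp_decreasing_open[of i s g]) auto
  then show ?thesis
    using Z[of s] Z[of i] s i unfolding g_def by simp
qed

lemma ou_unit_step_bound:
  fixes X W :: "real \<Rightarrow> real"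
  assumes \<alpha>: "\<alpha> > 0" and cont: "continuous_on {0..} X"
    and eq: "\<forall>t\<ge>0. X t = W t - \<alpha> * integral {0..t} X"
    and i: "0 \<le> i" and osc: "\<forall>u\<in>{i..i+1}. \<bar>W u - W i\<bar> \<le> b"
    and s: "s \<in> {i..i+1}" and b: "b \<ge> 0"
  shows "\<bar>X s\<bar> \<le> 2 * b + exp (\<alpha> * i) / exp (\<alpha> * s) * \<bar>X i\<bar>"
proof -
  let ?Z = "X s - W s + W i"
  have "c * ?Z - b \<le> exp (\<alpha> * i) / exp (\<alpha> * s) * \<bar>X i\<bar>" if c: "\<bar>c\<bar> = 1" for c
  proof -
    have "exp (\<alpha> * i) * (c * X i - b) \<le> exp (\<alpha> * i) * \<bar>X i\<bar>"
      using c b by (intro mult_left_mono) (auto simp: abs_if split: if_splits)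
    then have "exp (\<alpha> * s) * (c * ?Z - b) \<le> exp (\<alpha> * i) * \<bar>X i\<bar>"
      using ou_exp_weighted_decreasing[OF \<alpha> cont eq i osc s c] by linarith
    then show ?thesis by (simp add: pos_le_divide_eq mult.commute)
  qed
  from this[of 1] this[of "-1"] have "\<bar>?Z\<bar> \<le> b + exp (\<alpha> * i) / exp (\<alpha> * s) * \<bar>X i\<bar>" by simp
  moreover have "\<bar>W s - W i\<bar> \<le> b" using osc s by auto
  ultimately show ?thesis by linarith
qed

definition ou_path_const :: "real \<Rightarrow> real" where
  "ou_path_const \<alpha> = 2 + 2 / (1 - exp (- \<alpha>))"

lemma ou_path_const_ge_2: "\<alpha> > 0 \<Longrightarrow> ou_path_const \<alpha> \<ge> 2"
  unfolding ou_path_const_def by simp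

lemma ou_path_bound:
  fixes X W :: "real \<Rightarrow> real" and N :: nat
  assumes \<alpha>: "\<alpha> > 0" and cont: "continuous_on {0..} X"
    and eq: "\<forall>t\<ge>0. X t = W t - \<alpha> * integral {0..t} X"
    and W0: "W 0 = 0" and b: "b \<ge> 0"
    and osc: "\<forall>i<N. \<forall>u\<in>{real i..real i+1}. \<bar>W u - W (real i)\<bar> \<le> b"
    and s: "s \<in> {0..real N}"
  shows "\<bar>X s\<bar> \<le> ou_path_const \<alpha> * b"
proof -
  define q where "q = exp (- \<alpha>)"
  have q: "0 < q" "q < 1" using \<alpha> by (auto simp: q_def)
  define K where "K = 2 * b / (1 - q)"
  have K: "K \<ge> 0" and K_eq: "2 * b + q * K = K" using q b by (auto simp: K_def field_simps)
  have X0: "X 0 = 0" using eq W0 by auto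
  have integer_times: "\<bar>X (real i)\<bar> \<le> K" if "i \<le> N" for i
    using that
  proof (induction i)
    case 0
    then show ?case using X0 K by simp
  next
    case (Suc i)
    have "\<bar>X (real i + 1)\<bar> \<le> 2 * b + exp (\<alpha> * real i) / exp (\<alpha> * (real i + 1)) * \<bar>X (real i)\<bar>"
      by (rule ou_unit_step_bound[OF \<alpha> cont eq _ _ _ b]) (use osc Suc.prems in auto)
    also have "exp (\<alpha> * real i) / exp (\<alpha> * (real i + 1)) = q"
      unfolding q_def by (simp add: exp_diff[symmetric] algebra_simps)
    also have "2 * b + q * \<bar>X (real i)\<bar> \<le> 2 * b + q * K"
      using Suc q by (simp add: mult_left_mono)
    also have "\<dots> = K" by (rule K_eq)
    finally show ?case by (simp add: add.commute)
  qed
  show ?thesis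
  proof (cases "N = 0")
    case True
    then show ?thesis using X0 s b \<alpha> by (simp add: ou_path_const_def)
  next
    case False
    define i where "i = min (nat \<lfloor>s\<rfloor>) (N - 1)"
    have iN: "i < N" using False by (simp add: i_def)
    have si: "s \<in> {real i..real i + 1}"
      using s False unfolding i_def by (auto simp: min_def of_nat_diff) linarith+
    have "\<bar>X s\<bar> \<le> 2 * b + exp (\<alpha> * real i) / exp (\<alpha> * s) * \<bar>X (real i)\<bar>"
      by (rule ou_unit_step_bound[OF \<alpha> cont eq _ _ si b]) (use osc iN in auto)
    moreover have "exp (\<alpha> * real i) / exp (\<alpha> * s) * \<bar>X (real i)\<bar> \<le> 1 * K"
      using si \<alpha> integer_times[of i] iN by (intro mult_mono) auto
    ultimately have "\<bar>X s\<bar> \<le> 2 * b + K" by linarith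
    also have "2 * b + K = ou_path_const \<alpha> * b"
      unfolding K_def q_def ou_path_const_def by (simp add: algebra_simps)
    finally show ?thesis .
  qed
qed

subsection \<open>Dyadic chaining\<close>

text \<open>The weights sum to 1, yet (dyadic_weight n)^2 2^n = (9/8)^n / 16 still grows geometrically,
  so the Gaussian tails of the 2^n increments of level n remain summable over n.\<close>

definition dyadic_weight :: "nat \<Rightarrow> real" where
  "dyadic_weight n = (1/4) * (3/4) ^ n"

lemma dyadic_chain_bound:
  fixes f :: "real \<Rightarrow> real"
  assumes f0: "f 0 = 0" and b: "b \<ge> 0"
    and inc: "\<And>n j. j < 2 ^ n \<Longrightarrow> \<bar>f ((real j + 1) / 2 ^ n) - f (real j / 2 ^ n)\<bar> \<le> b * dyadic_weight n"
  shows "k \<le> 2 ^ m \<Longrightarrow> \<bar>f (real k / 2 ^ m)\<bar> \<le> b * (1 - (3/4) ^ (m+1))"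
proof (induction m arbitrary: k)
  case 0
  then have "k = 0 \<or> k = 1" by auto
  then show ?case using inc[of 0 0] f0 b by (auto simp: dyadic_weight_def)
next
  case (Suc m)
  show ?case
  proof (cases "even k")
    case True
    then obtain j where j: "k = 2 * j" by auto
    then have "\<bar>f (real k / 2 ^ Suc m)\<bar> \<le> b * (1 - (3/4) ^ (m+1))"
      using Suc by simp
    also have "\<dots> \<le> b * (1 - (3/4) ^ (Suc m+1))"
      using b by (intro mult_left_mono) (auto simp: power_decreasing)
    finally show ?thesis .
  next
    case False
    then obtain j where j: "k = 2 * j + 1" using oddE by blast
    then have jm: "2 * j < 2 ^ Suc m" using Suc.prems by linarith
    have "real k / 2 ^ Suc m = (real (2 * j) + 1) / 2 ^ Suc m" "real (2 * j) / 2 ^ Suc m = real j / 2 ^ m"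
      using j by simp_all
    then have "\<bar>f (real k / 2 ^ Suc m) - f (real j / 2 ^ m)\<bar> \<le> b * dyadic_weight (Suc m)"
      using inc[OF jm] by simp
    moreover have "\<bar>f (real j / 2 ^ m)\<bar> \<le> b * (1 - (3/4) ^ (m+1))" using Suc.IH jm by simp
    moreover have "b * dyadic_weight (Suc m) + b * (1 - (3/4) ^ (m+1)) = b * (1 - (3/4) ^ (Suc m+1))"
      by (simp add: dyadic_weight_def algebra_simps)
    ultimately show ?thesis by linarith
  qed
qed

lemma continuous_dyadic_chain_bound:
  fixes f :: "real \<Rightarrow> real"
  assumes f0: "f 0 = 0" and b: "b \<ge> 0" and cont: "continuous_on {0..1} f"
    and inc: "\<And>n j. j < 2 ^ n \<Longrightarrow> \<bar>f ((real j + 1) / 2 ^ n) - f (real j / 2 ^ n)\<bar> \<le> b * dyadic_weight n"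
    and u: "u \<in> {0..1}"
  shows "\<bar>f u\<bar> \<le> b"
proof (rule ccontr)
  assume "\<not> \<bar>f u\<bar> \<le> b"
  then obtain d where d: "d > 0"
    and near: "\<And>v. v \<in> {0..1} \<Longrightarrow> dist v u < d \<Longrightarrow> dist (f v) (f u) < \<bar>f u\<bar> - b"
    using cont u unfolding continuous_on_iff by (metis diff_gt_0_iff_gt not_le)
  obtain m :: nat where m: "(1/2) ^ m < d" using real_arch_pow_inv[OF d, of "1/2"] by auto
  define k where "k = nat \<lfloor>u * 2 ^ m\<rfloor>"
  have k: "real k \<le> u * 2 ^ m" "u * 2 ^ m < real k + 1"
    using u unfolding k_def by (simp_all add: of_nat_nat)
  have "u * 2 ^ m \<le> 2 ^ m" using u by simp
  then have kle: "k \<le> 2 ^ m" using k by (metis of_nat_le_iff of_nat_numeral of_nat_power order_trans)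
  define v where "v = real k / 2 ^ m"
  have "v \<in> {0..1}" using kle unfolding v_def by (auto simp: field_simps)
  moreover have "dist v u < d"
  proof -
    have "u - v = (u * 2 ^ m - real k) / 2 ^ m" unfolding v_def by (simp add: field_simps)
    then have "0 \<le> u - v" "u - v < 1 / 2 ^ m"
      using k by (simp_all add: divide_strict_right_mono)
    then show ?thesis using m by (simp add: dist_real_def power_one_over)
  qed
  ultimately have "dist (f v) (f u) < \<bar>f u\<bar> - b" by (rule near)
  moreover have "\<bar>f v\<bar> \<le> b * (1 - (3/4) ^ (m+1))"
    unfolding v_def by (rule dyadic_chain_bound[OF f0 b inc kle])
  moreover have "b * (1 - (3/4) ^ (m+1)) \<le> b" using b by (simp add: mult_left_le)
  ultimately show False by (simp add: dist_real_def)
qed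

subsection \<open>Large dyadic increments of Brownian motion\<close>

definition large_dyadic_increments ::
    "'a measure \<Rightarrow> (real \<Rightarrow> 'a \<Rightarrow> real) \<Rightarrow> real \<Rightarrow> nat \<Rightarrow> nat \<Rightarrow> 'a set" where
  "large_dyadic_increments M W b N n = (\<Union>i<N. \<Union>j<2^n. {\<omega>\<in>space M.
     b * dyadic_weight n < \<bar>W (real i + (real j + 1) / 2 ^ n) \<omega> - W (real i + real j / 2 ^ n) \<omega>\<bar>})"

lemma dyadic_tail_term_le:
  fixes a :: real
  assumes a: "a \<ge> 8 * ln 4"
  shows "2 ^ n * exp (- (a * (9/8) ^ n)) \<le> exp (- a) * (1/2) ^ n"
proof -
  have a0: "a \<ge> 0" using a by (smt (verit) ln_ge_zero)
  have "a * (1 + real n * (1/8)) \<le> a * (9/8) ^ n"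
    using Bernoulli_inequality[of "1/8" n] a0 by (intro mult_left_mono) auto
  then have "exp (- (a * (9/8) ^ n)) \<le> exp (- a) * exp (- (a/8)) ^ n"
    by (simp add: algebra_simps exp_of_nat_mult[symmetric] exp_add[symmetric])
  also have "\<dots> \<le> exp (- a) * (1/4) ^ n"
  proof -
    have "exp (- (a/8)) \<le> exp (- ln 4)" using a by simp
    then show ?thesis by (intro mult_left_mono power_mono) (auto simp: exp_minus)
  qed
  finally have "2 ^ n * exp (- (a * (9/8) ^ n)) \<le> 2 ^ n * (exp (- a) * (1/4) ^ n)"
    by (intro mult_left_mono) auto
  also have "\<dots> = exp (- a) * (2 * (1/4)) ^ n" by (simp only: power_mult_distrib) (simp add: algebra_simps)
  finally show ?thesis by simp
qed

lemma large_dyadic_increments_level: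
  assumes BM: "std_brownian_motion M W" and b: "b > 0" and a: "b\<^sup>2 / 32 \<ge> 8 * ln 4"
  shows "large_dyadic_increments M W b N n \<in> sets M"
    and "measure M (large_dyadic_increments M W b N n) \<le> real N * (2 * exp (- (b\<^sup>2 / 32)) * (1/2) ^ n)"
proof -
  interpret prob_space M using BM unfolding std_brownian_motion_def by simp
  define S where "S i j = {\<omega>\<in>space M.
     b * dyadic_weight n < \<bar>W (real i + (real j + 1) / 2 ^ n) \<omega> - W (real i + real j / 2 ^ n) \<omega>\<bar>}" for i j :: nat
  have "0 \<le> real i + real j / 2 ^ n" "real i + real j / 2 ^ n < real i + (real j + 1) / 2 ^ n"
    "0 \<le> b * dyadic_weight n" for i j
    using b by (auto simp: dyadic_weight_def divide_strict_right_mono)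
  note tail = std_brownian_motion_increment_tail[OF BM this]
  have S: "S i j \<in> sets M" for i j
    unfolding S_def using tail(1) .
  have "(dyadic_weight n)\<^sup>2 * 2 ^ n = (9/8) ^ n / 16"
    unfolding dyadic_weight_def
    by (simp add: power_mult_distrib power2_eq_square power_mult[symmetric]
        mult.assoc[symmetric] power_mult_distrib[symmetric])
  moreover have "real i + (real j + 1) / 2 ^ n - (real i + real j / 2 ^ n) = 1 / 2 ^ n" for i j :: nat
    by (simp add: field_simps)
  ultimately have exponent: "(b * dyadic_weight n)\<^sup>2 / (2 * (real i + (real j + 1) / 2 ^ n - (real i + real j / 2 ^ n)))
      = b\<^sup>2 / 32 * (9/8) ^ n" for i j :: nat
    by (simp add: power_mult_distrib mult.assoc) (simp add: ac_simps)
  have mS: "measure M (S i j) \<le> 2 * exp (- (b\<^sup>2 / 32 * (9/8) ^ n))" for i j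
    using tail(2)[of i j] unfolding S_def minus_divide_left[symmetric] exponent .
  have B: "large_dyadic_increments M W b N n = (\<Union>i<N. \<Union>j<2^n. S i j)"
    unfolding large_dyadic_increments_def S_def ..
  then show "large_dyadic_increments M W b N n \<in> sets M" using S by auto
  have "measure M (\<Union>i<N. \<Union>j<2^n. S i j) \<le> (\<Sum>i<N. measure M (\<Union>j<2^n. S i j))"
    by (rule measure_UNION_le) (use S in auto)
  also have "\<dots> \<le> (\<Sum>i<N. \<Sum>j<(2::nat)^n. measure M (S i j))"
    by (intro sum_mono measure_UNION_le) (use S in auto)
  also have "\<dots> \<le> (\<Sum>i<N. \<Sum>j<(2::nat)^n. 2 * exp (- (b\<^sup>2 / 32 * (9/8) ^ n)))"
    by (intro sum_mono mS)
  also have "\<dots> = real N * (2 * (2 ^ n * exp (- (b\<^sup>2 / 32 * (9/8) ^ n))))"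
    by simp
  also have "\<dots> \<le> real N * (2 * (exp (- (b\<^sup>2 / 32)) * (1/2) ^ n))"
    using dyadic_tail_term_le[OF a, of n] by (intro mult_left_mono) auto
  finally show "measure M (large_dyadic_increments M W b N n) \<le> real N * (2 * exp (- (b\<^sup>2 / 32)) * (1/2) ^ n)"
    unfolding B by (simp only: mult.assoc)
qed

lemma large_dyadic_increments_measure:
  assumes BM: "std_brownian_motion M W" and b: "b > 0" and a: "b\<^sup>2 / 32 \<ge> 8 * ln 4"
  shows "(\<Union>n. large_dyadic_increments M W b N n) \<in> sets M"
    and "measure M (\<Union>n. large_dyadic_increments M W b N n) \<le> real N * (4 * exp (- (b\<^sup>2 / 32)))"
proof -
  interpret prob_space M using BM unfolding std_brownian_motion_def by simp
  let ?B = "large_dyadic_increments M W b N" and ?g = "\<lambda>n. real N * (2 * exp (- (b\<^sup>2 / 32)) * (1/2) ^ n)"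
  note level = large_dyadic_increments_level[OF BM b a, of N]
  show "(\<Union>n. ?B n) \<in> sets M" using level(1) by auto
  have g: "summable ?g" by (intro summable_mult summable_geometric) simp
  then have B: "summable (\<lambda>n. measure M (?B n))"
    by (rule summable_comparison_test[rotated]) (use level(2) in auto)
  have "measure M (\<Union>n. ?B n) \<le> (\<Sum>n. measure M (?B n))"
    by (rule finite_measure_subadditive_countably) (use level(1) B in auto)
  also have "\<dots> \<le> (\<Sum>n. ?g n)"
    by (rule suminf_le[OF level(2) B g])
  also have "\<dots> = real N * (4 * exp (- (b\<^sup>2 / 32)))"
    by (simp add: suminf_mult summable_geometric suminf_geometric)
  finally show "measure M (\<Union>n. ?B n) \<le> real N * (4 * exp (- (b\<^sup>2 / 32)))" .
qed

lemma oscillation_le_outside_large_dyadic_increments: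
  assumes BM: "std_brownian_motion M W" and b: "b \<ge> 0"
    and \<omega>: "\<omega> \<in> space M" "\<omega> \<notin> (\<Union>n. large_dyadic_increments M W b N n)"
    and i: "i < N" and u: "u \<in> {real i..real i+1}"
  shows "\<bar>W u \<omega> - W (real i) \<omega>\<bar> \<le> b"
proof -
  define f where "f v = W (real i + v) \<omega> - W (real i) \<omega>" for v
  have "continuous_on {0..} (\<lambda>t. W t \<omega>)" using BM \<omega> unfolding std_brownian_motion_def by auto
  then have cont: "continuous_on {0..1} f"
    unfolding f_def by (intro continuous_intros continuous_on_compose2[OF \<open>continuous_on {0..} _\<close>]) auto
  have inc: "\<bar>f ((real j + 1) / 2 ^ n) - f (real j / 2 ^ n)\<bar> \<le> b * dyadic_weight n"
    if "j < 2 ^ n" for n j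
    using \<omega> i that unfolding f_def large_dyadic_increments_def by (auto simp: not_less)
  have "\<bar>f (u - real i)\<bar> \<le> b"
    by (rule continuous_dyadic_chain_bound[OF _ b cont inc]) (use u in \<open>auto simp: f_def\<close>)
  then show ?thesis by (simp add: f_def)
qed

subsection \<open>Tail of the running maximum\<close>

lemma ou_sup_tail:
  assumes \<alpha>: "\<alpha> > 0" and BM: "std_brownian_motion M W" and OU: "ou_solution M \<alpha> W X"
    and b: "b > 0" "b\<^sup>2 / 32 \<ge> 8 * ln 4"
    and t: "0 \<le> t" "t \<le> real N" and L: "ou_path_const \<alpha> * b < L"
  shows "measure M {\<omega>\<in>space M. L \<le> (SUP s\<in>{0..t}. \<bar>X s \<omega>\<bar>)} \<le> real N * (4 * exp (- (b\<^sup>2 / 32)))"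
proof -
  interpret prob_space M using BM unfolding std_brownian_motion_def by simp
  note bad = large_dyadic_increments_measure[OF BM b, of N]
  have "{\<omega>\<in>space M. L \<le> (SUP s\<in>{0..t}. \<bar>X s \<omega>\<bar>)} \<subseteq> (\<Union>n. large_dyadic_increments M W b N n)"
  proof (rule subsetI, rule ccontr)
    fix \<omega> assume \<omega>: "\<omega> \<in> {\<omega>\<in>space M. L \<le> (SUP s\<in>{0..t}. \<bar>X s \<omega>\<bar>)}"
      and good: "\<omega> \<notin> (\<Union>n. large_dyadic_increments M W b N n)"
    have "continuous_on {0..} (\<lambda>t. X t \<omega>)" "\<forall>t\<ge>0. X t \<omega> = W t \<omega> - \<alpha> * integral {0..t} (\<lambda>s. X s \<omega>)"
      "W 0 \<omega> = 0"
      using OU BM \<omega> unfolding ou_solution_def std_brownian_motion_def by auto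
    moreover have "\<forall>i<N. \<forall>u\<in>{real i..real i+1}. \<bar>W u \<omega> - W (real i) \<omega>\<bar> \<le> b"
      using b \<omega> by (intro allI impI ballI oscillation_le_outside_large_dyadic_increments[OF BM _ _ good]) auto
    ultimately have "\<bar>X s \<omega>\<bar> \<le> ou_path_const \<alpha> * b" if "s \<in> {0..t}" for s
      using b t that by (intro ou_path_bound[where X = "\<lambda>t. X t \<omega>" and W = "\<lambda>t. W t \<omega>", OF \<alpha>]) auto
    then have "(SUP s\<in>{0..t}. \<bar>X s \<omega>\<bar>) \<le> ou_path_const \<alpha> * b"
      using t by (intro cSUP_least) auto
    then show False using \<omega> L by simp
  qed
  then show ?thesis by (rule order_trans[OF finite_measure_mono bad(2)]) (rule bad(1))
qed

lemma ou_sup_log_tail: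
  assumes \<alpha>: "\<alpha> > 0" and BM: "std_brownian_motion M W" and OU: "ou_solution M \<alpha> W X"
    and t: "t \<ge> 2" and \<delta>: "\<delta> > 0"
    and r: "r = 1 / (128 * (ou_path_const \<alpha> * \<delta>)\<^sup>2)" "16 \<le> r"
  shows "measure M {\<omega>\<in>space M. (SUP s\<in>{0..t}. \<bar>X s \<omega>\<bar>) \<ge> sqrt (ln t) / \<delta>} \<le> 8 * 2 powr (1 - r)"
proof -
  define C where "C = ou_path_const \<alpha>"
  have C: "C \<ge> 2" using ou_path_const_ge_2[OF \<alpha>] by (simp add: C_def)
  have lnt: "ln t \<ge> ln 2" "ln t > 0" using t by auto
  define b where "b = sqrt (ln t) / (2 * C * \<delta>)"
  have b: "b > 0" using lnt C \<delta> by (simp add: b_def)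
  have b2: "b\<^sup>2 / 32 = ln t * r"
    using lnt C \<delta> unfolding b_def r(1) C_def[symmetric] by (simp add: power_divide power_mult_distrib field_simps)
  have "ln 2 * 16 \<le> ln t * r" using lnt r(2) by (intro mult_mono) auto
  then have "b\<^sup>2 / 32 \<ge> 8 * ln 4"
    unfolding b2 by (simp add: ln_realpow[of 2 2, simplified])
  moreover have "C * b < sqrt (ln t) / \<delta>"
    using lnt C \<delta> by (simp add: b_def field_simps)
  ultimately have "measure M {\<omega>\<in>space M. (SUP s\<in>{0..t}. \<bar>X s \<omega>\<bar>) \<ge> sqrt (ln t) / \<delta>}
      \<le> real (nat \<lceil>t\<rceil>) * (4 * exp (- (b\<^sup>2 / 32)))"
    using t b by (intro ou_sup_tail[OF \<alpha> BM OU]) (auto simp: C_def)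
  also have "\<dots> \<le> 2 * t * (4 * exp (- (b\<^sup>2 / 32)))"
    using t by (intro mult_right_mono) (linarith, simp)
  also have "\<dots> = 8 * t powr (1 - r)"
    using t unfolding b2 by (simp add: powr_def exp_diff exp_minus divide_inverse algebra_simps)
  also have "\<dots> \<le> 8 * 2 powr (1 - r)"
    using t r(2) by (simp add: powr_mono2')
  finally show ?thesis .
qed

theorem lemma3p2:
  fixes M :: "'a measure" and \<alpha> :: real and W X :: "real \<Rightarrow> 'a \<Rightarrow> real"
  assumes "\<alpha> > 0"
    and "std_brownian_motion M W"
    and "ou_solution M \<alpha> W X"
  shows "\<exists>\<phi> :: real \<Rightarrow> real. (\<forall>\<delta>\<ge>0. \<phi> \<delta> \<ge> 0) \<and> (\<phi> \<longlongrightarrow> 0) (at_right 0) \<and>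
           (\<forall>t\<ge>2. \<forall>\<delta>>0.
              measure M {\<omega>\<in>space M. (SUP s\<in>{0..t}. \<bar>X s \<omega>\<bar>) \<ge> sqrt (ln t) / \<delta>} \<le> \<phi> \<delta>)"
proof -
  interpret prob_space M using assms(2) unfolding std_brownian_motion_def by simp
  define r where "r \<delta> = 1 / (128 * (ou_path_const \<alpha> * \<delta>)\<^sup>2)" for \<delta>
  define \<phi> where "\<phi> \<delta> = (if 16 \<le> r \<delta> then 8 * 2 powr (1 - r \<delta>) else 1)" for \<delta>
  have C: "ou_path_const \<alpha> > 0" using ou_path_const_ge_2[OF assms(1)] by simp
  have "eventually (\<lambda>\<delta>. 16 \<le> r \<delta>) (at_right 0)"
    unfolding r_def using C by real_asymp
  then have "eventually (\<lambda>\<delta>. 8 * 2 powr (1 - r \<delta>) = \<phi> \<delta>) (at_right 0)"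
    by eventually_elim (simp add: \<phi>_def)
  moreover have "((\<lambda>\<delta>. 8 * 2 powr (1 - r \<delta>)) \<longlongrightarrow> 0) (at_right 0)"
    unfolding r_def using C by real_asymp
  ultimately have "(\<phi> \<longlongrightarrow> 0) (at_right 0)" by (rule Lim_transform_eventually[rotated])
  moreover have "measure M {\<omega>\<in>space M. (SUP s\<in>{0..t}. \<bar>X s \<omega>\<bar>) \<ge> sqrt (ln t) / \<delta>} \<le> \<phi> \<delta>"
    if "t \<ge> 2" "\<delta> > 0" for t \<delta>
    using ou_sup_log_tail[OF assms that r_def] by (auto simp: \<phi>_def)
  moreover have "\<phi> \<delta> \<ge> 0" for \<delta> by (simp add: \<phi>_def)
  ultimately show ?thesis by blast
qed

end
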